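(* Let $Q = R_0(u_0) \leftarrow A_1 \wedge \cdots \wedge A_m$ be a conjunctive query with $var(Q)=\{X_1,\ldots,X_k\}$, equipped with an arbitrary set of functional dependencies on its relations, and assume $Q=chase(Q)$. Let $s(Q)$ be the optimal value of the following linear program in the $2^k$ real variables $h(S)$, $S\subseteq[k]$ (with $h(\emptyset)=0$): \begin{align*} \text{maximize } \quad & h(u_0)\\ \text{subject to } \quad & h(u_i)\le 1 \quad \text{for all } i=1,\ldots,m,\\ & h(\{t\}\mid\{i_1,\ldots,i_j\})=0 \quad \text{for each induced dependency } X_{i_1},\ldots,X_{i_j}\to X_t \text{ in } F(Q),\\ & h(\{i\}\mid [k]\setminus\{i\})\ge 0 \quad \text{for all } i\in[k],\\ & I(i;j\mid S)\ge 0 \quad \text{for all } i\neq j\in[k] \text{ and } S\subseteq[k]\setminus\{i,j\}. \end{align*} Then for every database $D$ (with nonempty relations) satisfying the functional dependencies, $|Q(D)|\le \mathrm{rmax}(Q,D)^{s(Q)}$.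
   Context: A conjunctive query has the form $Q = R_0(u_0)\leftarrow A_1\wedge\cdots\wedge A_m$, where each body atom is $A_i=R_{j(i)}(u_i)$ for a relation name $R_{j(i)}$ among $R_1,\ldots,R_n$ (a relation name may occur in several atoms, so $m\ge n$), each $u_i$ is a list of (not necessarily distinct) variables of length equal to the arity of $R_{j(i)}$, and every variable of the head list $u_0$ occurs in some $u_i$, $i\ge1$. $var(Q)$ is the set of all variables of $Q$. A database $D$ consists of a finite universe $U$ and a finite relation $R_j^D$ over $U$ for each relation name. The answer $Q(D)$ is the set of tuples $\theta(u_0)$ over all maps $\theta: var(Q)\to U$ such that $\theta(u_i)\in R_{j(i)}^D$ for every $i\ge1$. $\mathrm{rmax}(Q,D)$ denotes the number of tuples in the largest of the relations $R_1^D,\ldots,R_n^D$. A functional dependency (FD) $V\to a$ on a relation $R$, where $V$ is a set of attribute positions of $R$ and $a$ a position, is satisfied by $D$ if any two tuples of $R^D$ agreeing on all positions in $V$ also agree on position $a$. Each FD $V\to a$ on $R$ and each body atom $R(u)$ induce the dependency among query variables $\{u[p]:p\in V\}\to u[a]$; $F(Q)$ denotes the set of all such induced dependencies. $Q=chase(Q)$ means: no atom occurs twice in the body, and for every relation $R$, every FD $V\to a$ on $R$ and every two body atoms $R(u),R(u')$, if $u[p]=u'[p]$ for all $p\in V$ then $u[a]=u'[a]$. Linear-program notation: for a variable list $u$, $h(u)$ means $h(S_u)$ where $S_u\subseteq[k]$ is the set of indices of variables occurring in $u$. For $A,B\subseteq[k]$, $h(A\mid B):=h(A\cup B)-h(B)$,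 and $I(i;j\mid S):=h(\{i\}\cup S)+h(\{j\}\cup S)-h(S)-h(\{i,j\}\cup S)$. (These constraints are the Shannon information inequalities with $h(S)$ playing the role of the joint entropy of $\{X_s: s\in S\}$.) *)

theory Defs
  imports Complex_Main
begin

text \<open>Query variables are natural numbers; var(Q) = {0..<k} (0-based X_1..X_k). Attribute positions are 0-based.
  An FD (R, V, a) on relation R states V \<rightarrow> a.\<close>

type_synonym 'r atom = "'r \<times> nat list"
type_synonym 'r fd = "'r \<times> nat set \<times> nat"

definition body_vars :: "'r atom list \<Rightarrow> nat set" where
  "body_vars body = (\<Union>(R,u)\<in>set body. set u)"

definition well_formed_query ::
  "('r \<Rightarrow> nat) \<Rightarrow> nat list \<Rightarrow> 'r atom list \<Rightarrow> bool" where
  "well_formed_query arity u0 body \<longleftrightarrow>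
     (\<forall>(R,u)\<in>set body. length u = arity R) \<and> set u0 \<subseteq> body_vars body"

definition well_formed_fds :: "('r \<Rightarrow> nat) \<Rightarrow> 'r fd set \<Rightarrow> bool" where
  "well_formed_fds arity fds \<longleftrightarrow> (\<forall>(R,V,a)\<in>fds. V \<subseteq> {..<arity R} \<and> a < arity R)"

definition is_chased :: "'r atom list \<Rightarrow> 'r fd set \<Rightarrow> bool" where
  "is_chased body fds \<longleftrightarrow> distinct body \<and>
     (\<forall>(R,V,a)\<in>fds. \<forall>u u'. (R,u) \<in> set body \<longrightarrow> (R,u') \<in> set body \<longrightarrow>
        (\<forall>p\<in>V. u!p = u'!p) \<longrightarrow> u!a = u'!a)"

definition induced_fds :: "'r atom list \<Rightarrow> 'r fd set \<Rightarrow> (nat set \<times> nat) set" where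
  "induced_fds body fds =
     {((\<lambda>p. u!p) ` V, u!a) | R V a u. (R,V,a) \<in> fds \<and> (R,u) \<in> set body}"

definition well_formed_db :: "('r \<Rightarrow> nat) \<Rightarrow> 'u set \<Rightarrow> ('r \<Rightarrow> 'u list set) \<Rightarrow> bool" where
  "well_formed_db arity U rel \<longleftrightarrow> finite U \<and>
     (\<forall>R. \<forall>t\<in>rel R. length t = arity R \<and> set t \<subseteq> U)"

definition satisfies_fds :: "('r \<Rightarrow> 'u list set) \<Rightarrow> 'r fd set \<Rightarrow> bool" where
  "satisfies_fds rel fds \<longleftrightarrow>
     (\<forall>(R,V,a)\<in>fds. \<forall>t\<in>rel R. \<forall>t'\<in>rel R. (\<forall>p\<in>V. t!p = t'!p) \<longrightarrow> t!a = t'!a)"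

definition answer :: "nat list \<Rightarrow> 'r atom list \<Rightarrow> 'u set \<Rightarrow> ('r \<Rightarrow> 'u list set) \<Rightarrow> 'u list set" where
  "answer u0 body U rel =
     {map \<theta> u0 | \<theta>. (\<forall>x\<in>body_vars body. \<theta> x \<in> U) \<and> (\<forall>(R,u)\<in>set body. map \<theta> u \<in> rel R)}"

definition rmax :: "'r atom list \<Rightarrow> ('r \<Rightarrow> 'u list set) \<Rightarrow> nat" where
  "rmax body rel = Max ((\<lambda>(R,u). card (rel R)) ` set body)"

definition cond_ent :: "(nat set \<Rightarrow> real) \<Rightarrow> nat set \<Rightarrow> nat set \<Rightarrow> real" where
  "cond_ent h A B = h (A \<union> B) - h B"

definition mutual_inf :: "(nat set \<Rightarrow> real) \<Rightarrow> nat \<Rightarrow> nat \<Rightarrow> nat set \<Rightarrow> real" where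
  "mutual_inf h i j S = h (insert i S) + h (insert j S) - h S - h ({i,j} \<union> S)"

text \<open>Feasible solutions of the linear program (only values on subsets of {0..<k} matter).\<close>
definition lp_feasible :: "nat \<Rightarrow> 'r atom list \<Rightarrow> 'r fd set \<Rightarrow> (nat set \<Rightarrow> real) \<Rightarrow> bool" where
  "lp_feasible k body fds h \<longleftrightarrow>
     h {} = 0 \<and>
     (\<forall>(R,u)\<in>set body. h (set u) \<le> 1) \<and>
     (\<forall>(A,t)\<in>induced_fds body fds. cond_ent h {t} A = 0) \<and>
     (\<forall>i<k. cond_ent h {i} ({..<k} - {i}) \<ge> 0) \<and>
     (\<forall>i<k. \<forall>j<k. \<forall>S. i \<noteq> j \<longrightarrow> S \<subseteq> {..<k} - {i,j} \<longrightarrow> mutual_inf h i j S \<ge> 0)"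

definition sQ :: "nat \<Rightarrow> nat list \<Rightarrow> 'r atom list \<Rightarrow> 'r fd set \<Rightarrow> real" where
  "sQ k u0 body fds = Sup {h (set u0) | h. lp_feasible k body fds h}"

end

theory Submission
  imports Defs
begin

(* Fix a database D and choose, for every answer tuple a of Q(D), one satisfying assignment
   t_a with t_a(u0) = a; let T be the set of these assignments, so |T| = |Q(D)| = n.
   For a set S of query variables let H(S) be the Shannon entropy (natural logarithm) of the
   restriction to S of an assignment drawn uniformly from T.  Then
     (1) H is a polymatroid: H({}) = 0, monotone and submodular;
     (2) H(u_i) <= ln |R^D| <= ln M for every atom, with M = rmax(Q,D);
     (3) H({t} | A) = 0 for every induced dependency A -> t, since D satisfies the FDs;
     (4) H(u0) = ln n, because distinct elements of T differ on u0.
   Hence if M > 1 the function h = H / ln M is feasible for the linear program, giving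
   ln n / ln M = h(u0) <= s(Q), i.e. n <= M powr s(Q).  If M = 1 every relation has one
   tuple and Q(D) has at most one element. *)

section \<open>Counting entropy of a finite set of functions\<close>

definition agree_on :: "'a set \<Rightarrow> ('a \<Rightarrow> 'b) \<Rightarrow> ('a \<Rightarrow> 'b) \<Rightarrow> bool" where
  "agree_on P s t \<longleftrightarrow> (\<forall>x\<in>P. s x = t x)"

text \<open>Size of the class of t in T under agreement on P; under the uniform distribution on T,
  the probability of the event that the restriction to P equals that of t is this size over |T|.\<close>
definition class_size :: "('a \<Rightarrow> 'b) set \<Rightarrow> 'a set \<Rightarrow> ('a \<Rightarrow> 'b) \<Rightarrow> real" where
  "class_size T P t = real (card {s\<in>T. agree_on P s t})"

text \<open>|T| times the Shannon entropy (base e) of the restriction to P of a uniform element of T.\<close>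
definition count_entropy :: "('a \<Rightarrow> 'b) set \<Rightarrow> 'a set \<Rightarrow> real" where
  "count_entropy T P = (\<Sum>t\<in>T. ln (real (card T) / class_size T P t))"

lemma agree_on_sym: "agree_on P s t = agree_on P t s"
  by (auto simp: agree_on_def)

lemma class_size_ge_1:
  assumes "finite T" "t \<in> T"
  shows "class_size T P t \<ge> 1"
proof -
  have "{s\<in>T. agree_on P s t} \<noteq> {}" using assms(2) by (auto simp: agree_on_def)
  then have "card {s\<in>T. agree_on P s t} \<ge> 1"
    using assms(1) by (simp add: Suc_le_eq card_gt_0_iff)
  then show ?thesis by (simp add: class_size_def)
qed

text \<open>Core counting estimate behind submodularity: for fixed a, b the elements t agreeing
  with a on P and with b on Q form one class for P \<union> Q inside one class for P \<inter> Q.\<close>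
lemma pair_class_sum_le:
  assumes T: "finite T" and a: "a \<in> T"
  shows "(\<Sum>t\<in>T. if agree_on P a t \<and> agree_on Q b t
             then 1 / (class_size T (P\<inter>Q) t * class_size T (P\<union>Q) t) else 0)
         \<le> (if agree_on (P\<inter>Q) a b then 1 / class_size T (P\<inter>Q) a else 0)"
proof -
  define W where "W = {t\<in>T. agree_on P a t \<and> agree_on Q b t}"
  have sum_W: "(\<Sum>t\<in>T. if agree_on P a t \<and> agree_on Q b t
       then 1 / (class_size T (P\<inter>Q) t * class_size T (P\<union>Q) t) else 0)
     = (\<Sum>t\<in>W. 1 / (class_size T (P\<inter>Q) t * class_size T (P\<union>Q) t))"
    unfolding W_def using T by (simp add: sum.inter_filter)
  show ?thesis
  proof (cases "W = {}")
    case True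
    then show ?thesis using sum_W class_size_ge_1[OF T a, of "P\<inter>Q"] by simp
  next
    case False
    then obtain t0 where t0: "t0 \<in> W" by blast
    have ab: "agree_on (P\<inter>Q) a b" using t0 unfolding W_def agree_on_def by auto
    have meet_class: "class_size T (P\<inter>Q) t = class_size T (P\<inter>Q) a" if "t \<in> W" for t
    proof -
      have "{s\<in>T. agree_on (P\<inter>Q) s t} = {s\<in>T. agree_on (P\<inter>Q) s a}"
        using that unfolding W_def agree_on_def by auto
      then show ?thesis by (simp add: class_size_def)
    qed
    have join_class: "class_size T (P\<union>Q) t = real (card W)" if "t \<in> W" for t
    proof -
      have "{s\<in>T. agree_on (P\<union>Q) s t} = W"
        using that unfolding W_def agree_on_def by auto
      then show ?thesis by (simp add: class_size_def)
    qed
    have "card W > 0" using T t0 by (auto simp: W_def card_gt_0_iff)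
    then have "(\<Sum>t\<in>W. 1 / (class_size T (P\<inter>Q) t * class_size T (P\<union>Q) t))
        = 1 / class_size T (P\<inter>Q) a"
      using meet_class join_class by simp
    then show ?thesis using sum_W ab by simp
  qed
qed

text \<open>Summing the previous estimate over all pairs (a, b): the ratio of class sizes whose
  logarithm is the submodularity defect has sum at most |T|.\<close>
lemma class_ratio_sum_le:
  assumes T: "finite T"
  shows "(\<Sum>t\<in>T. class_size T P t * class_size T Q t
            / (class_size T (P\<inter>Q) t * class_size T (P\<union>Q) t)) \<le> real (card T)"
proof -
  let ?d = "\<lambda>t. 1 / (class_size T (P\<inter>Q) t * class_size T (P\<union>Q) t)"
  let ?E = "\<lambda>a b t. if agree_on P a t \<and> agree_on Q b t then ?d t else 0"
  have indicator_sum: "class_size T S t = (\<Sum>a\<in>T. if agree_on S a t then 1 else 0)" for S t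
    unfolding class_size_def using T by (simp add: sum.inter_filter[symmetric])
  have expand: "class_size T P t * class_size T Q t * ?d t = (\<Sum>a\<in>T. \<Sum>b\<in>T. ?E a b t)" for t
  proof -
    have "class_size T P t * class_size T Q t
        = (\<Sum>a\<in>T. \<Sum>b\<in>T. (if agree_on P a t then 1 else 0) * (if agree_on Q b t then 1 else 0))"
      unfolding indicator_sum[of P] indicator_sum[of Q] by (rule sum_product)
    then have "class_size T P t * class_size T Q t * ?d t
        = (\<Sum>a\<in>T. \<Sum>b\<in>T. (if agree_on P a t then 1 else 0) * (if agree_on Q b t then 1 else 0)) * ?d t"
      by simp
    also have "\<dots> = (\<Sum>a\<in>T. \<Sum>b\<in>T. ?E a b t)"
      unfolding sum_distrib_right by (intro sum.cong refl) simp
    finally show ?thesis .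
  qed
  have "(\<Sum>t\<in>T. class_size T P t * class_size T Q t * ?d t) = (\<Sum>t\<in>T. \<Sum>a\<in>T. \<Sum>b\<in>T. ?E a b t)"
    using expand by simp
  also have "\<dots> = (\<Sum>a\<in>T. \<Sum>t\<in>T. \<Sum>b\<in>T. ?E a b t)"
    by (rule sum.swap)
  also have "\<dots> = (\<Sum>a\<in>T. \<Sum>b\<in>T. \<Sum>t\<in>T. ?E a b t)"
    by (rule sum.cong[OF refl], rule sum.swap)
  also have "\<dots> \<le> (\<Sum>a\<in>T. \<Sum>b\<in>T. if agree_on (P\<inter>Q) a b then 1 / class_size T (P\<inter>Q) a else 0)"
    by (intro sum_mono pair_class_sum_le[OF T])
  also have "\<dots> = (\<Sum>a\<in>T. 1)"
  proof (rule sum.cong[OF refl])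
    fix a assume a: "a \<in> T"
    have "(\<Sum>b\<in>T. if agree_on (P\<inter>Q) a b then 1 / class_size T (P\<inter>Q) a else 0)
        = (\<Sum>b\<in>{b\<in>T. agree_on (P\<inter>Q) b a}. 1 / class_size T (P\<inter>Q) a)"
      using T by (simp only: sum.inter_filter agree_on_sym)
    also have "\<dots> = class_size T (P\<inter>Q) a * (1 / class_size T (P\<inter>Q) a)"
      by (simp add: class_size_def)
    finally show "(\<Sum>b\<in>T. if agree_on (P\<inter>Q) a b then 1 / class_size T (P\<inter>Q) a else 0) = 1"
      using class_size_ge_1[OF T a, of "P\<inter>Q"] by simp
  qed
  finally show ?thesis by simp
qed

text \<open>Submodularity of entropy, via ln x \<le> x - 1 applied to the class-size ratios.\<close>
lemma count_entropy_submodular: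
  assumes T: "finite T"
  shows "count_entropy T (P\<inter>Q) + count_entropy T (P\<union>Q) \<le> count_entropy T P + count_entropy T Q"
proof -
  let ?r = "\<lambda>t. class_size T P t * class_size T Q t / (class_size T (P\<inter>Q) t * class_size T (P\<union>Q) t)"
  have pos: "class_size T S t > 0" if "t \<in> T" for S t
    using class_size_ge_1[OF T that, of S] by simp
  have card_pos: "real (card T) > 0" if "t \<in> T" for t using T that card_gt_0_iff by fastforce
  have defect: "ln (real (card T) / class_size T P t) + ln (real (card T) / class_size T Q t)
      - ln (real (card T) / class_size T (P\<inter>Q) t) - ln (real (card T) / class_size T (P\<union>Q) t)
      = - ln (?r t)" if t: "t \<in> T" for t
    using pos[OF t, of P] pos[OF t, of Q] pos[OF t, of "P\<inter>Q"] pos[OF t, of "P\<union>Q"] card_pos[OF t]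
    by (simp add: ln_div ln_mult)
  have "count_entropy T P + count_entropy T Q - count_entropy T (P\<inter>Q) - count_entropy T (P\<union>Q)
      = (\<Sum>t\<in>T. - ln (?r t))"
    unfolding count_entropy_def sum_subtractf[symmetric] sum.distrib[symmetric]
    by (rule sum.cong[OF refl]) (rule defect)
  also have "\<dots> \<ge> (\<Sum>t\<in>T. 1 - ?r t)"
  proof (rule sum_mono)
    fix t assume "t \<in> T"
    then have "?r t > 0" using pos by simp
    then show "1 - ?r t \<le> - ln (?r t)" using ln_le_minus_one[of "?r t"] by simp
  qed
  also have "(\<Sum>t\<in>T. 1 - ?r t) = real (card T) - (\<Sum>t\<in>T. ?r t)"
    by (simp add: sum_subtractf)
  finally show ?thesis using class_ratio_sum_le[OF T, of P Q] by simp
qed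

text \<open>Monotonicity: refining the coordinate set shrinks every class.\<close>
lemma count_entropy_mono:
  assumes T: "finite T" and "A \<subseteq> B"
  shows "count_entropy T A \<le> count_entropy T B"
  unfolding count_entropy_def
proof (rule sum_mono)
  fix t assume t: "t \<in> T"
  have "card {s\<in>T. agree_on B s t} \<le> card {s\<in>T. agree_on A s t}"
    using assms by (intro card_mono) (auto simp: agree_on_def)
  then have "class_size T B t \<le> class_size T A t" by (simp add: class_size_def)
  moreover have "class_size T B t > 0" using class_size_ge_1[OF T t, of B] by simp
  moreover have "real (card T) > 0" using T t card_gt_0_iff by fastforce
  ultimately show "ln (real (card T) / class_size T A t) \<le> ln (real (card T) / class_size T B t)"
    by (simp add: divide_left_mono)
qed

lemma count_entropy_empty: "finite T \<Longrightarrow> count_entropy T {} = 0"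
  by (simp add: count_entropy_def class_size_def agree_on_def)

text \<open>Coordinate sets inducing the same agreement relation on T have equal entropy;
  this expresses that a functional dependency carries no information.\<close>
lemma count_entropy_cong:
  assumes "\<And>s t. s \<in> T \<Longrightarrow> t \<in> T \<Longrightarrow> agree_on A s t \<longleftrightarrow> agree_on B s t"
  shows "count_entropy T A = count_entropy T B"
proof -
  have "{s\<in>T. agree_on A s t} = {s\<in>T. agree_on B s t}" if "t \<in> T" for t
    using assms that by blast
  then show ?thesis unfolding count_entropy_def class_size_def by simp
qed

text \<open>Entropy is at most the logarithm of the support size: if agreement on S is
  equality of g, the entropy of S is bounded by ln |g ` T| (Gibbs' inequality).\<close>
lemma count_entropy_le_ln_image:
  assumes T: "finite T" and ne: "T \<noteq> {}"
    and g: "\<And>s t. s \<in> T \<Longrightarrow> t \<in> T \<Longrightarrow> agree_on S s t \<longleftrightarrow> g s = g t"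
  shows "count_entropy T S \<le> real (card T) * ln (real (card (g ` T)))"
proof -
  define K where "K = real (card (g ` T))"
  define n where "n = real (card T)"
  have K: "K > 0" using T ne by (simp add: K_def card_gt_0_iff)
  have n: "n > 0" using T ne by (simp add: n_def card_gt_0_iff)
  have class_fiber: "class_size T S t = real (card {s\<in>T. g s = g t})" if "t \<in> T" for t
  proof -
    have "{s\<in>T. agree_on S s t} = {s\<in>T. g s = g t}" using g that by blast
    then show ?thesis by (simp add: class_size_def)
  qed
  have pos: "class_size T S t > 0" if "t \<in> T" for t using class_size_ge_1[OF T that, of S] by simp
  have inverse_sum: "(\<Sum>t\<in>T. 1 / class_size T S t) = K"
  proof -
    have "(\<Sum>t\<in>T. 1 / class_size T S t) = (\<Sum>y\<in>g ` T. \<Sum>t\<in>{x\<in>T. g x = y}. 1 / class_size T S t)"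
      using T by (rule sum.image_gen)
    also have "\<dots> = (\<Sum>y\<in>g ` T. 1)"
    proof (rule sum.cong[OF refl])
      fix y assume "y \<in> g ` T"
      then obtain t0 where t0: "t0 \<in> T" "y = g t0" by auto
      have "(\<Sum>t\<in>{x\<in>T. g x = y}. 1 / class_size T S t)
          = (\<Sum>t\<in>{x\<in>T. g x = y}. 1 / real (card {x\<in>T. g x = y}))"
        using class_fiber by (intro sum.cong) auto
      also have "\<dots> = 1" using class_size_ge_1[OF T t0(1), of S] class_fiber[OF t0(1)] t0 by simp
      finally show "(\<Sum>t\<in>{x\<in>T. g x = y}. 1 / class_size T S t) = 1" .
    qed
    finally show ?thesis by (simp add: K_def)
  qed
  have "count_entropy T S = (\<Sum>t\<in>T. ln (n / (K * class_size T S t)) + ln K)"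
    unfolding count_entropy_def n_def[symmetric]
    using pos K n by (intro sum.cong) (auto simp: ln_div ln_mult dest: pos)
  also have "\<dots> \<le> (\<Sum>t\<in>T. (n / (K * class_size T S t) - 1) + ln K)"
    using pos K n by (intro sum_mono add_right_mono ln_le_minus_one) auto
  also have "\<dots> = (n / K) * (\<Sum>t\<in>T. 1 / class_size T S t) - n + n * ln K"
    by (simp add: sum.distrib sum_subtractf sum_distrib_left n_def)
  also have "\<dots> = n * ln K" using inverse_sum K by simp
  finally show ?thesis by (simp add: n_def K_def)
qed

lemma count_entropy_key:
  assumes key: "\<And>s t. s \<in> T \<Longrightarrow> t \<in> T \<Longrightarrow> agree_on K s t \<Longrightarrow> s = t"
  shows "count_entropy T K = real (card T) * ln (real (card T))"
proof -
  have "{s\<in>T. agree_on K s t} = {t}" if "t \<in> T" for t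
    using that key by (auto simp: agree_on_def)
  then have "class_size T K t = 1" if "t \<in> T" for t
    using that by (simp add: class_size_def)
  then show ?thesis by (simp add: count_entropy_def)
qed


section \<open>Consequences of the linear-program constraints\<close>

lemma lp_elemental:
  assumes "lp_feasible k body fds h" "i < k" "j < k" "i \<noteq> j" "S \<subseteq> {..<k}" "i \<notin> S" "j \<notin> S"
  shows "h (insert i (insert j S)) - h (insert j S) \<le> h (insert i S) - h S"
proof -
  have "mutual_inf h i j S \<ge> 0" using assms unfolding lp_feasible_def by blast
  moreover have "{i,j} \<union> S = insert i (insert j S)" by auto
  ultimately show ?thesis unfolding mutual_inf_def by simp
qed

lemma lp_diminishing_returns:
  assumes F: "lp_feasible k body fds h" and AB: "A \<subseteq> B" and B: "B \<subseteq> {..<k}"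
    and i: "i < k" "i \<notin> B"
  shows "h (insert i B) - h B \<le> h (insert i A) - h A"
proof -
  have "finite D \<Longrightarrow> A \<union> D \<subseteq> {..<k} \<Longrightarrow> i \<notin> A \<union> D \<Longrightarrow>
      h (insert i (A \<union> D)) - h (A \<union> D) \<le> h (insert i A) - h A" for D
  proof (induction D rule: finite_induct)
    case empty
    then show ?case by simp
  next
    case (insert j D)
    show ?case
    proof (cases "j \<in> A")
      case True
      then have "A \<union> insert j D = A \<union> D" by auto
      then show ?thesis using insert by simp
    next
      case False
      then have "h (insert i (insert j (A \<union> D))) - h (insert j (A \<union> D))
          \<le> h (insert i (A \<union> D)) - h (A \<union> D)"
        using insert by (intro lp_elemental[OF F i(1)]) auto
      moreover have "A \<union> insert j D = insert j (A \<union> D)" by auto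
      ultimately show ?thesis using insert by auto
    qed
  qed
  moreover have "A \<union> (B - A) = B" using AB by auto
  moreover have "finite (B - A)" using B finite_subset by blast
  ultimately show ?thesis using B i by metis
qed

text \<open>Feasible solutions are monotone: the constraint h({i} | rest) \<ge> 0 combined with
  diminishing returns gives h A \<le> h (insert i A), then induct.\<close>
lemma lp_mono:
  assumes F: "lp_feasible k body fds h" and AB: "A \<subseteq> B" and B: "B \<subseteq> {..<k}"
  shows "h A \<le> h B"
proof -
  have step: "h C \<le> h (insert i C)" if C: "C \<subseteq> {..<k}" and i: "i < k" "i \<notin> C" for C i
  proof -
    have "h (insert i ({..<k} - {i})) - h ({..<k} - {i}) \<le> h (insert i C) - h C"
      using C i by (intro lp_diminishing_returns[OF F]) auto
    moreover have "cond_ent h {i} ({..<k} - {i}) \<ge> 0" using F i unfolding lp_feasible_def by blast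
    moreover have "{i} \<union> ({..<k} - {i}) = insert i ({..<k} - {i})" by auto
    ultimately show ?thesis unfolding cond_ent_def by simp
  qed
  have "finite D \<Longrightarrow> A \<union> D \<subseteq> {..<k} \<Longrightarrow> h A \<le> h (A \<union> D)" for D
  proof (induction D rule: finite_induct)
    case empty
    then show ?case by simp
  next
    case (insert j D)
    then have "h (A \<union> D) \<le> h (A \<union> insert j D)"
      using step[of "A \<union> D" j] by (cases "j \<in> A \<union> D") (auto simp: insert_absorb)
    then show ?case using insert by auto
  qed
  moreover have "A \<union> (B - A) = B" using AB by auto
  moreover have "finite (B - A)" using B finite_subset by blast
  ultimately show ?thesis using B by metis
qed

lemma lp_subadditive:
  assumes F: "lp_feasible k body fds h" and A: "A \<subseteq> {..<k}" and B: "B \<subseteq> {..<k}"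
  shows "h (A \<union> B) \<le> h A + h B"
proof -
  have "finite B" using B finite_subset by blast
  then show ?thesis using B
  proof (induction B rule: finite_induct)
    case empty
    then show ?case using F by (simp add: lp_feasible_def)
  next
    case (insert j B)
    show ?case
    proof (cases "j \<in> A \<union> B")
      case True
      then have "A \<union> insert j B = A \<union> B" by auto
      moreover have "h B \<le> h (insert j B)" using lp_mono[OF F, of B "insert j B"] insert by auto
      ultimately show ?thesis using insert by auto
    next
      case False
      have "h (insert j (A \<union> B)) - h (A \<union> B) \<le> h (insert j B) - h B"
        using lp_diminishing_returns[OF F, of B "A \<union> B" j] insert False A by auto
      moreover have "A \<union> insert j B = insert j (A \<union> B)" by auto
      ultimately show ?thesis using insert by auto
    qed
  qed
qed

lemma lp_atoms_bound:
  assumes F: "lp_feasible k body fds h" and bv: "body_vars body = {..<k}"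
    and sub: "set bs \<subseteq> set body"
  shows "h (body_vars bs) \<le> real (length bs)"
  using sub
proof (induction bs)
  case Nil
  then show ?case using F by (simp add: lp_feasible_def body_vars_def)
next
  case (Cons a bs)
  obtain R u where a: "a = (R, u)" by fastforce
  have au: "(R,u) \<in> set body" using Cons a by auto
  have su: "set u \<subseteq> {..<k}" using au bv unfolding body_vars_def by auto
  have sb: "body_vars bs \<subseteq> {..<k}" using Cons bv unfolding body_vars_def by auto
  have "body_vars (a # bs) = set u \<union> body_vars bs" by (simp add: body_vars_def a)
  moreover have "h (set u) \<le> 1" using F au unfolding lp_feasible_def by fastforce
  moreover have "h (set u \<union> body_vars bs) \<le> h (set u) + h (body_vars bs)"
    using lp_subadditive[OF F su sb] .
  ultimately show ?case using Cons by auto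
qed

text \<open>The LP is bounded (by the number of atoms), so every feasible objective value is
  below its supremum s(Q).\<close>
lemma lp_objective_le_sQ:
  assumes F: "lp_feasible k body fds h" and bv: "body_vars body = {..<k}"
    and wq: "well_formed_query arity u0 body"
  shows "h (set u0) \<le> sQ k u0 body fds"
proof -
  have bound: "g (set u0) \<le> real (length body)" if G: "lp_feasible k body fds g" for g
  proof -
    have "set u0 \<subseteq> {..<k}" using wq bv by (simp add: well_formed_query_def)
    then have "g (set u0) \<le> g (body_vars body)" using lp_mono[OF G] bv by simp
    also have "\<dots> \<le> real (length body)" using lp_atoms_bound[OF G bv] by simp
    finally show ?thesis .
  qed
  have "bdd_above {g (set u0) | g. lp_feasible k body fds g}"
    unfolding bdd_above_def using bound by blast
  then show ?thesis unfolding sQ_def using F by (intro cSup_upper) blast+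
qed


section \<open>The entropy of the answer assignments is a feasible solution\<close>

lemma relation_finite:
  assumes "well_formed_db arity U rel"
  shows "finite (rel R)"
proof -
  have "rel R \<subseteq> {xs. set xs \<subseteq> U \<and> length xs = arity R}"
    using assms by (auto simp: well_formed_db_def)
  moreover have "finite U" using assms by (simp add: well_formed_db_def)
  ultimately show ?thesis using finite_lists_length_eq finite_subset by blast
qed

lemma answer_finite:
  assumes "well_formed_query arity u0 body" "well_formed_db arity U rel"
  shows "finite (answer u0 body U rel)"
proof -
  have "answer u0 body U rel \<subseteq> {xs. set xs \<subseteq> U \<and> length xs = length u0}"
    using assms(1) unfolding answer_def by (auto simp: well_formed_query_def subset_iff)
  moreover have "finite U" using assms(2) by (simp add: well_formed_db_def)
  ultimately show ?thesis using finite_lists_length_eq finite_subset by blast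
qed

lemma card_rel_le_rmax:
  assumes "(R,u) \<in> set body"
  shows "card (rel R) \<le> rmax body rel"
  unfolding rmax_def using assms by (intro Max_ge) force+

text \<open>Each answer is produced by a satisfying assignment; choosing one per answer yields a
  set T of assignments in bijection with Q(D) on which u0 is a key.\<close>
lemma answer_assignments:
  assumes fin: "finite (answer u0 body U rel)"
  obtains T :: "(nat \<Rightarrow> 'u) set"
  where "finite T" "card T = card (answer u0 body U rel)"
    and "\<And>t R u. t \<in> T \<Longrightarrow> (R,u) \<in> set body \<Longrightarrow> map t u \<in> rel R"
    and "\<And>s t. s \<in> T \<Longrightarrow> t \<in> T \<Longrightarrow> agree_on (set u0) s t \<Longrightarrow> s = t"
proof -
  let ?A = "answer u0 body U rel"
  have "\<forall>a\<in>?A. \<exists>\<theta>. a = map \<theta> u0 \<and> (\<forall>(R,u)\<in>set body. map \<theta> u \<in> rel R)"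
    unfolding answer_def by blast
  then obtain \<theta> where \<theta>: "\<And>a. a \<in> ?A \<Longrightarrow> a = map (\<theta> a) u0 \<and> (\<forall>(R,u)\<in>set body. map (\<theta> a) u \<in> rel R)"
    by metis
  have inj: "inj_on \<theta> ?A" by (rule inj_onI) (metis \<theta>)
  show ?thesis
  proof
    show "finite (\<theta> ` ?A)" using fin by simp
    show "card (\<theta> ` ?A) = card ?A" using card_image[OF inj] .
    show "map t u \<in> rel R" if "t \<in> \<theta> ` ?A" "(R,u) \<in> set body" for t R u
      using that \<theta> by fastforce
    show "s = t" if st: "s \<in> \<theta> ` ?A" "t \<in> \<theta> ` ?A" and ag: "agree_on (set u0) s t" for s t
    proof -
      obtain a b where ab: "a \<in> ?A" "b \<in> ?A" "s = \<theta> a" "t = \<theta> b" using st by blast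
      have "map s u0 = map t u0" using ag by (simp add: agree_on_def)
      then have "a = b" using \<theta>[OF ab(1)] \<theta>[OF ab(2)] ab(3,4) by simp
      then show ?thesis using ab by simp
    qed
  qed
qed

lemma count_entropy_atom:
  assumes fT: "finite T" and ne: "T \<noteq> {}" and fin: "finite (rel R)"
    and sat: "\<And>t. t \<in> T \<Longrightarrow> map t u \<in> rel R" and M: "real (card (rel R)) \<le> M"
  shows "count_entropy T (set u) \<le> real (card T) * ln M"
proof -
  let ?g = "\<lambda>t. map t u"
  have "count_entropy T (set u) \<le> real (card T) * ln (real (card (?g ` T)))"
    by (rule count_entropy_le_ln_image[OF fT ne]) (simp add: agree_on_def)
  also have "\<dots> \<le> real (card T) * ln M"
  proof -
    have "card (?g ` T) \<le> card (rel R)" using sat fin by (intro card_mono) auto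
    then have "real (card (?g ` T)) \<le> M" using M by linarith
    moreover have "card (?g ` T) > 0" using fT ne by (simp add: card_gt_0_iff)
    ultimately show ?thesis by (intro mult_left_mono) auto
  qed
  finally show ?thesis .
qed

lemma count_entropy_induced_fd:
  assumes wq: "well_formed_query arity u0 body" and wf: "well_formed_fds arity fds"
    and sat: "satisfies_fds rel fds" and dep: "(X,x) \<in> induced_fds body fds"
    and atoms: "\<And>t R u. t \<in> T \<Longrightarrow> (R,u) \<in> set body \<Longrightarrow> map t u \<in> rel R"
  shows "count_entropy T ({x} \<union> X) = count_entropy T X"
proof (rule count_entropy_cong)
  obtain R V a u where d: "X = (\<lambda>p. u!p) ` V" "x = u!a" "(R,V,a) \<in> fds" "(R,u) \<in> set body"
    using dep unfolding induced_fds_def by blast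
  have len: "length u = arity R" using wq d(4) by (auto simp: well_formed_query_def)
  have Va: "V \<subseteq> {..<arity R}" "a < arity R" using wf d(3) by (auto simp: well_formed_fds_def)
  fix s t assume st: "s \<in> T" "t \<in> T"
  have "s x = t x" if ag: "agree_on X s t"
  proof -
    have "\<forall>p\<in>V. map s u ! p = map t u ! p"
      using ag Va len unfolding d(1) agree_on_def by auto
    then have "map s u ! a = map t u ! a"
      using sat d(3) atoms[OF st(1) d(4)] atoms[OF st(2) d(4)] unfolding satisfies_fds_def by blast
    then show ?thesis using Va len d(2) by simp
  qed
  then show "agree_on ({x} \<union> X) s t \<longleftrightarrow> agree_on X s t" by (auto simp: agree_on_def)
qed

lemma count_entropy_lp_feasible:
  assumes wq: "well_formed_query arity u0 body" and wf: "well_formed_fds arity fds"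
    and sat: "satisfies_fds rel fds" and fin: "\<And>R. finite (rel R)"
    and fT: "finite T" and ne: "T \<noteq> {}"
    and atoms: "\<And>t R u. t \<in> T \<Longrightarrow> (R,u) \<in> set body \<Longrightarrow> map t u \<in> rel R"
    and size: "\<And>R u. (R,u) \<in> set body \<Longrightarrow> real (card (rel R)) \<le> M" and M: "M > 1"
  shows "lp_feasible k body fds (\<lambda>S. count_entropy T S / (real (card T) * ln M))"
    (is "lp_feasible k body fds ?h")
proof -
  have c: "real (card T) * ln M > 0" using fT ne M by (simp add: card_gt_0_iff)
  have "?h {} = 0" using count_entropy_empty[OF fT] by simp
  moreover have "?h (set u) \<le> 1" if Ru: "(R,u) \<in> set body" for R u
    using count_entropy_atom[where rel = rel and R = R, OF fT ne fin atoms[OF _ Ru] size[OF Ru]] c by simp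
  moreover have "cond_ent ?h {x} X = 0" if "(X,x) \<in> induced_fds body fds" for X x
    using count_entropy_induced_fd[OF wq wf sat that atoms] by (simp add: cond_ent_def)
  moreover have "0 \<le> cond_ent ?h {i} ({..<k} - {i})" for i
    using count_entropy_mono[OF fT] c by (simp add: cond_ent_def divide_right_mono subset_insertI2)
  moreover have "0 \<le> mutual_inf ?h i j S" if "i \<noteq> j" "S \<subseteq> {..<k} - {i, j}" for i j S
  proof -
    have "insert i S \<inter> insert j S = S" "insert i S \<union> insert j S = {i,j} \<union> S" using that by auto
    then have "count_entropy T S + count_entropy T ({i,j} \<union> S)
        \<le> count_entropy T (insert i S) + count_entropy T (insert j S)"
      using count_entropy_submodular[OF fT, of "insert i S" "insert j S"] by simp
    then show ?thesis unfolding mutual_inf_def using c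
      by (simp add: add_divide_distrib[symmetric] diff_divide_distrib[symmetric] divide_nonneg_pos)
  qed
  ultimately show ?thesis unfolding lp_feasible_def by blast
qed


lemma answer_card_le_powr_sQ:
  assumes wq: "well_formed_query arity u0 body" and bv: "body_vars body = {..<k}"
    and wf: "well_formed_fds arity fds" and wd: "well_formed_db arity U rel"
    and sat: "satisfies_fds rel fds"
    and size: "\<And>R u. (R,u) \<in> set body \<Longrightarrow> real (card (rel R)) \<le> M" and M: "M > 1"
  shows "real (card (answer u0 body U rel)) \<le> M powr sQ k u0 body fds"
proof -
  define n where "n = real (card (answer u0 body U rel))"
  obtain T where fT: "finite T" and cT: "card T = card (answer u0 body U rel)"
    and atoms: "\<And>t R u. t \<in> T \<Longrightarrow> (R,u) \<in> set body \<Longrightarrow> map t u \<in> rel R"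
    and key: "\<And>s t. s \<in> T \<Longrightarrow> t \<in> T \<Longrightarrow> agree_on (set u0) s t \<Longrightarrow> s = t"
    using answer_assignments[OF answer_finite[OF wq wd]] by blast
  show ?thesis
  proof (cases "T = {}")
    case True
    then show ?thesis using cT by simp
  next
    case False
    then have "card T > 0" using fT by (simp add: card_gt_0_iff)
    then have n: "n > 0" by (simp add: n_def cT[symmetric])
    have "count_entropy T (set u0) / (n * ln M) \<le> sQ k u0 body fds"
      using lp_objective_le_sQ[OF count_entropy_lp_feasible[OF wq wf sat relation_finite[OF wd]
            fT False atoms size M] bv wq]
      by (simp add: cT n_def)
    then have "ln n / ln M \<le> sQ k u0 body fds"
      using count_entropy_key[OF key] n M by (simp add: cT n_def)
    then have "M powr (ln n / ln M) \<le> M powr sQ k u0 body fds" using M by (intro powr_mono) auto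
    moreover have "M powr (ln n / ln M) = n" using M n by (simp add: powr_def)
    ultimately show ?thesis by (simp add: n_def)
  qed
qed

text \<open>The degenerate case rmax = 1: a satisfying assignment is forced on every variable.\<close>
lemma answer_card_le_1:
  assumes wq: "well_formed_query arity u0 body" and fin: "\<And>R. finite (rel R)"
    and single: "\<And>R u. (R,u) \<in> set body \<Longrightarrow> card (rel R) \<le> 1"
  shows "card (answer u0 body U rel) \<le> 1"
proof -
  have all_equal: "a1 = a2" if a: "a1 \<in> answer u0 body U rel" "a2 \<in> answer u0 body U rel" for a1 a2
  proof -
    obtain t1 t2 where t1: "a1 = map t1 u0" "\<forall>(R,u)\<in>set body. map t1 u \<in> rel R"
      and t2: "a2 = map t2 u0" "\<forall>(R,u)\<in>set body. map t2 u \<in> rel R"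
      using a unfolding answer_def by blast
    have "t1 x = t2 x" if x: "x \<in> body_vars body" for x
    proof -
      obtain R u where Ru: "(R,u) \<in> set body" "x \<in> set u" using x unfolding body_vars_def by auto
      have "map t1 u \<in> rel R" "map t2 u \<in> rel R" using t1 t2 Ru by auto
      moreover have "card (rel R) \<le> Suc 0" using single[OF Ru(1)] by simp
      ultimately have "map t1 u = map t2 u" using card_le_Suc0_iff_eq[OF fin] by blast
      then show ?thesis using Ru(2) by simp
    qed
    then show ?thesis using t1 t2 wq by (auto simp: well_formed_query_def)
  qed
  show ?thesis
  proof (cases "finite (answer u0 body U rel)")
    case True
    then show ?thesis unfolding One_nat_def card_le_Suc0_iff_eq[OF True] using all_equal by blast
  qed simp
qed

theorem theorem1:
  fixes arity :: "'r \<Rightarrow> nat"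
    and u0 :: "nat list" and body :: "'r atom list" and k :: nat
    and fds :: "'r fd set"
    and U :: "'u set" and rel :: "'r \<Rightarrow> 'u list set"
  assumes "well_formed_query arity u0 body"
    and "body_vars body = {..<k}"
    and "body \<noteq> []"
    and "well_formed_fds arity fds"
    and "is_chased body fds"
    and "well_formed_db arity U rel"
    and "\<forall>(R,u)\<in>set body. rel R \<noteq> {}"
    and "satisfies_fds rel fds"
  shows "real (card (answer u0 body U rel)) \<le> real (rmax body rel) powr sQ k u0 body fds"
proof -
  note wq = assms(1) and wd = assms(6)
  define M where "M = real (rmax body rel)"
  have fin: "finite (rel R)" for R using relation_finite[OF wd] .
  have size: "real (card (rel R)) \<le> M" if "(R,u) \<in> set body" for R u
    using card_rel_le_rmax[OF that] by (simp add: M_def)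
  obtain R1 u1 where a1: "(R1,u1) \<in> set body" using assms(3) by (cases body) auto
  have "card (rel R1) > 0" using assms(7) a1 fin[of R1] by (auto simp: card_gt_0_iff)
  then have "M \<ge> 1" using size[OF a1] by linarith
  then consider "M = 1" | "M > 1" by linarith
  then show ?thesis
  proof cases
    case 1
    then have "card (rel R) \<le> 1" if "(R,u) \<in> set body" for R u
      using size[OF that] by simp
    then have "card (answer u0 body U rel) \<le> 1" by (rule answer_card_le_1[OF wq fin])
    then show ?thesis using 1 by (simp add: M_def)
  next
    case 2
    then show ?thesis unfolding M_def[symmetric]
      using answer_card_le_powr_sQ[OF wq assms(2,4,6,8) size] by simp
  qed
qed

end
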